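(* Let $\mathfrak{A}$ be a finite-dimensional alternative $\mathbb{Q}$-algebra with radical $\mathfrak{R}$, so that $\mathfrak{A}\cong\mathfrak{S}\oplus\mathfrak{R}$ with $\mathfrak{S}$ a semisimple subalgebra. If $\mathfrak{A}$ has the hyperbolic property, then $\mathfrak{R}$ is $2$-nilpotent (i.e. $\mathfrak{R}^2=0$), and there exists $j_0\in\mathfrak{R}$ with $j_0^2=0$ such that $\mathfrak{R}=\mathbb{Q}j_0$ is the $\mathbb{Q}$-linear span of $j_0$.
   Context: An algebra is alternative if $(xx)y=x(xy)$ and $(yx)x=y(xx)$ for all $x,y$. A $\mathbb{Z}$-order of a finite-dimensional $\mathbb{Q}$-algebra $\mathfrak{A}$ is a unital subring $\Gamma$ that is finitely generated as a $\mathbb{Z}$-module and spans $\mathfrak{A}$ over $\mathbb{Q}$; its units (elements with a two-sided inverse in $\Gamma$) form a loop $\mathcal{U}(\Gamma)$ under multiplication. A loop has the hyperbolic property if it contains no subgroup isomorphic to the free abelian group $\mathbb{Z}^2$ of rank two. The algebra $\mathfrak{A}$ has the hyperbolic property if there exists a $\mathbb{Z}$-order $\Gamma\subset\mathfrak{A}$ whose unit loop $\mathcal{U}(\Gamma)$ has the hyperbolic property. *)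

theory Defs
  imports Complex_Main
begin

definition fd_Q_algebra ::
  "(rat \<Rightarrow> 'a \<Rightarrow> 'a) \<Rightarrow> ('a::ab_group_add \<Rightarrow> 'a \<Rightarrow> 'a) \<Rightarrow> 'a \<Rightarrow> bool" where
  "fd_Q_algebra sc m e \<longleftrightarrow>
     vector_space sc \<and>
     (\<exists>B. finite B \<and> module.span sc B = UNIV) \<and>
     (\<forall>x y z. m (x + y) z = m x z + m y z \<and> m x (y + z) = m x y + m x z) \<and>
     (\<forall>c x y. m (sc c x) y = sc c (m x y) \<and> m x (sc c y) = sc c (m x y)) \<and>
     (\<forall>x. m e x = x \<and> m x e = x)"

definition alternative :: "('a \<Rightarrow> 'a \<Rightarrow> 'a) \<Rightarrow> bool" where
  "alternative m \<longleftrightarrow> (\<forall>x y. m (m x x) y = m x (m x y) \<and> m (m y x) x = m y (m x x))"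

definition is_ideal ::
  "(rat \<Rightarrow> 'a \<Rightarrow> 'a) \<Rightarrow> ('a::ab_group_add \<Rightarrow> 'a \<Rightarrow> 'a) \<Rightarrow> 'a set \<Rightarrow> bool" where
  "is_ideal sc m I \<longleftrightarrow> module.subspace sc I \<and> (\<forall>x i. i \<in> I \<longrightarrow> m x i \<in> I \<and> m i x \<in> I)"

inductive prod_of :: "('a \<Rightarrow> 'a \<Rightarrow> 'a) \<Rightarrow> 'a set \<Rightarrow> nat \<Rightarrow> 'a \<Rightarrow> bool"
  for m I where
  base: "x \<in> I \<Longrightarrow> prod_of m I 1 x"
| mult: "prod_of m I a x \<Longrightarrow> prod_of m I b y \<Longrightarrow> prod_of m I (a + b) (m x y)"

text \<open>I is nilpotent: I^n = 0 for some n >= 1 (I^n is spanned by all products of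
n elements of I in all bracketings).\<close>
definition nilpotent_set :: "('a::zero \<Rightarrow> 'a \<Rightarrow> 'a) \<Rightarrow> 'a set \<Rightarrow> bool" where
  "nilpotent_set m I \<longleftrightarrow> (\<exists>n\<ge>1. \<forall>x. prod_of m I n x \<longrightarrow> x = 0)"

definition is_radical ::
  "(rat \<Rightarrow> 'a \<Rightarrow> 'a) \<Rightarrow> ('a::ab_group_add \<Rightarrow> 'a \<Rightarrow> 'a) \<Rightarrow> 'a set \<Rightarrow> bool" where
  "is_radical sc m R \<longleftrightarrow> is_ideal sc m R \<and> nilpotent_set m R \<and>
     (\<forall>I. is_ideal sc m I \<and> nilpotent_set m I \<longrightarrow> I \<subseteq> R)"

definition Z_order ::
  "(rat \<Rightarrow> 'a \<Rightarrow> 'a) \<Rightarrow> ('a::ab_group_add \<Rightarrow> 'a \<Rightarrow> 'a) \<Rightarrow> 'a \<Rightarrow> 'a set \<Rightarrow> bool" where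
  "Z_order sc m e G \<longleftrightarrow>
     e \<in> G \<and> (\<forall>x\<in>G. \<forall>y\<in>G. x - y \<in> G \<and> m x y \<in> G) \<and>
     (\<exists>F. finite F \<and> G = {\<Sum>g\<in>F. sc (of_int (c g)) g | c. True}) \<and>
     module.span sc G = UNIV"

definition unit_loop :: "('a \<Rightarrow> 'a \<Rightarrow> 'a) \<Rightarrow> 'a \<Rightarrow> 'a set \<Rightarrow> 'a set" where
  "unit_loop m e G = {u \<in> G. \<exists>v\<in>G. m u v = e \<and> m v u = e}"

definition contains_Z2 :: "('a \<Rightarrow> 'a \<Rightarrow> 'a) \<Rightarrow> 'a set \<Rightarrow> bool" where
  "contains_Z2 m U \<longleftrightarrow> (\<exists>\<phi> :: int \<times> int \<Rightarrow> 'a. inj \<phi> \<and> range \<phi> \<subseteq> U \<and>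
     (\<forall>a b c d. \<phi> (a + c, b + d) = m (\<phi> (a, b)) (\<phi> (c, d))))"

definition hyperbolic_loop :: "('a \<Rightarrow> 'a \<Rightarrow> 'a) \<Rightarrow> 'a set \<Rightarrow> bool" where
  "hyperbolic_loop m U \<longleftrightarrow> \<not> contains_Z2 m U"

definition hyperbolic_algebra ::
  "(rat \<Rightarrow> 'a \<Rightarrow> 'a) \<Rightarrow> ('a::ab_group_add \<Rightarrow> 'a \<Rightarrow> 'a) \<Rightarrow> 'a \<Rightarrow> bool" where
  "hyperbolic_algebra sc m e \<longleftrightarrow>
     (\<exists>G. Z_order sc m e G \<and> hyperbolic_loop m (unit_loop m e G))"

end

theory Submission imports Defs begin

text \<open>If R is not a rational line, choose a nonzero product l of maximal length (it
annihilates R) and then a product x outside the line Ql of maximal length; since x^2 is a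
longer product, it lies in Ql. Multiplying by suitable integers puts x and l into a given
Z-order, and there the units e + aX + (b + ta^2)Y, with X^2 = 2tY and X, Y otherwise
annihilating each other, form a copy of Z^2, contradicting hyperbolicity. So R = Qj0, and
j0^2 = c j0 forces c = 0, since otherwise j0/c would be a nonzero idempotent.\<close>

section \<open>Products of elements of a set\<close>

lemma prod_of_pos: "prod_of m I k x \<Longrightarrow> 1 \<le> k"
  by (induction rule: prod_of.induct) auto

lemma prod_of_mem:
  assumes "prod_of m I k x" and "\<forall>x\<in>I. \<forall>y\<in>I. m x y \<in> I"
  shows "x \<in> I"
  using assms by (induction rule: prod_of.induct) auto

lemma prod_of_shorter:
  assumes "prod_of m I k x" and closed: "\<forall>x\<in>I. \<forall>y\<in>I. m x y \<in> I"
    and "1 \<le> j" and "j \<le> k"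
  shows "prod_of m I j x"
  using assms(1,3,4)
proof (induction arbitrary: j rule: prod_of.induct)
  case (base x)
  then show ?case using prod_of.base[of x I m] by simp
next
  case (mult a x b y)
  have a1: "1 \<le> a" and b1: "1 \<le> b"
    using prod_of_pos[OF mult.hyps(1)] prod_of_pos[OF mult.hyps(2)] .
  show ?case
  proof (cases "j = 1")
    case True
    have "m x y \<in> I"
      using prod_of_mem[OF mult.hyps(1) closed] prod_of_mem[OF mult.hyps(2) closed] closed
      by blast
    then show ?thesis using True prod_of.base[of "m x y" I m] by simp
  next
    case False
    define i where "i = min a (j - 1)"
    have "1 \<le> i" "i \<le> a" "1 \<le> j - i" "j - i \<le> b" "i \<le> j"
      using False a1 b1 mult.prems unfolding i_def by auto
    then have "prod_of m I i x" "prod_of m I (j - i) y"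
      using mult.IH(1)[of i] mult.IH(2)[of "j - i"] by simp_all
    then have "prod_of m I (i + (j - i)) (m x y)"
      by (rule prod_of.mult)
    then show ?thesis using \<open>i \<le> j\<close> by simp
  qed
qed

lemma nilpotent_prod_of_eq_0:
  assumes "nilpotent_set m I" and "\<forall>x\<in>I. \<forall>y\<in>I. m x y \<in> I"
  obtains n where "\<And>k x. prod_of m I k x \<Longrightarrow> n \<le> k \<Longrightarrow> x = 0"
proof -
  obtain n where "1 \<le> n" and "\<And>x. prod_of m I n x \<Longrightarrow> x = 0"
    using assms(1) unfolding nilpotent_set_def by blast
  have "x = 0" if "prod_of m I k x" and "n \<le> k" for k x
    using prod_of_shorter[OF that(1) assms(2) \<open>1 \<le> n\<close> that(2)] \<open>\<And>x. prod_of m I n x \<Longrightarrow> x = 0\<close>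
    by blast
  then show ?thesis using that by blast
qed

lemma nilpotent_deepest_product:
  assumes "nilpotent_set m I" and "\<forall>x\<in>I. \<forall>y\<in>I. m x y \<in> I"
    and "y \<in> I" and "y \<notin> Z" and "0 \<in> Z"
  obtains k x where "prod_of m I k x" and "x \<notin> Z"
    and "\<And>j z. prod_of m I j z \<Longrightarrow> k < j \<Longrightarrow> z \<in> Z"
proof -
  obtain n where vanish: "\<And>k x. prod_of m I k x \<Longrightarrow> n \<le> k \<Longrightarrow> x = 0"
    using nilpotent_prod_of_eq_0[OF assms(1,2)] by blast
  define P where "P k \<longleftrightarrow> (\<exists>x. prod_of m I k x \<and> x \<notin> Z)" for k
  have bounded: "k \<le> n" if "P k" for k
  proof (rule ccontr)
    obtain x where "prod_of m I k x" and "x \<notin> Z"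
      using \<open>P k\<close> unfolding P_def by blast
    moreover assume "\<not> k \<le> n"
    ultimately have "x = 0"
      using vanish by simp
    with \<open>x \<notin> Z\<close> \<open>0 \<in> Z\<close> show False by simp
  qed
  have "P 1"
    using prod_of.base[OF assms(3)] assms(4) unfolding P_def by blast
  define k where "k = (GREATEST k. P k)"
  have "P k"
    unfolding k_def using \<open>P 1\<close> bounded by (rule GreatestI_nat)
  then obtain x where "prod_of m I k x" and "x \<notin> Z"
    unfolding P_def by blast
  moreover have "z \<in> Z" if "prod_of m I j z" and "k < j" for j z
  proof (rule ccontr)
    assume "z \<notin> Z"
    with \<open>prod_of m I j z\<close> have "P j"
      unfolding P_def by blast
    then have "j \<le> k"
      unfolding k_def using bounded by (rule Greatest_le_nat)
    with \<open>k < j\<close> show False by simp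
  qed
  ultimately show ?thesis
    by (rule that)
qed

lemma nilpotent_idempotent_eq_0:
  assumes "nilpotent_set m I" and "f \<in> I" and "m f f = f"
  shows "f = 0"
proof -
  have powers: "prod_of m I (Suc k) f" for k
  proof (induction k)
    case 0
    show ?case using \<open>f \<in> I\<close> prod_of.base by simp
  next
    case (Suc k)
    have "prod_of m I (Suc k + 1) (m f f)"
      using Suc prod_of.base[OF \<open>f \<in> I\<close>] by (rule prod_of.mult)
    then show ?case using \<open>m f f = f\<close> by simp
  qed
  obtain n where "1 \<le> n" and "\<And>x. prod_of m I n x \<Longrightarrow> x = 0"
    using assms(1) unfolding nilpotent_set_def by blast
  then show ?thesis
    using powers[of "n - 1"] by simp
qed

locale Q_algebra = vector_space sc
  for sc :: "rat \<Rightarrow> 'a::ab_group_add \<Rightarrow> 'a" +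
  fixes m :: "'a \<Rightarrow> 'a \<Rightarrow> 'a" and e :: 'a
  assumes mult_add_left [simp]: "m (x + y) z = m x z + m y z"
    and mult_add_right [simp]: "m x (y + z) = m x y + m x z"
    and mult_scale_left [simp]: "m (sc c x) y = sc c (m x y)"
    and mult_scale_right [simp]: "m x (sc c y) = sc c (m x y)"
    and mult_unit_left [simp]: "m e x = x"
    and mult_unit_right [simp]: "m x e = x"
begin

lemma mult_zero_left [simp]: "m 0 y = 0"
  using mult_add_left[of 0 0 y] by simp

lemma nilpotent_ideal_square_in_line:
  assumes "is_ideal sc m R" and "nilpotent_set m R"
    and not_line: "\<forall>j\<in>R. \<not> R \<subseteq> range (\<lambda>c. sc c j)"
  obtains x l where "x \<in> R" and "l \<in> R" and "l \<noteq> 0"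
    and "\<And>z. z \<in> R \<Longrightarrow> m l z = 0" and "\<And>z. z \<in> R \<Longrightarrow> m z l = 0"
    and "x \<notin> range (\<lambda>c. sc c l)" and "m x x \<in> range (\<lambda>c. sc c l)"
proof -
  have closed: "\<forall>x\<in>R. \<forall>y\<in>R. m x y \<in> R"
    using assms(1) unfolding is_ideal_def by blast
  have "0 \<in> R"
    using assms(1) subspace_0 unfolding is_ideal_def by blast
  then have "\<not> R \<subseteq> range (\<lambda>c. sc c 0)"
    using not_line by blast
  then obtain y where "y \<in> R" "y \<notin> {0}"
    by auto
  then obtain k l where kl: "prod_of m R k l" "l \<notin> {0}"
    and deeper: "\<And>j z. prod_of m R j z \<Longrightarrow> k < j \<Longrightarrow> z \<in> {0}"
    using nilpotent_deepest_product[OF assms(2) closed] by blast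
  have "m l z = 0" "m z l = 0" if "z \<in> R" for z
    using deeper[OF prod_of.mult[OF kl(1) prod_of.base[OF that]]]
      deeper[OF prod_of.mult[OF prod_of.base[OF that] kl(1)]] prod_of_pos[OF kl(1)]
    by auto
  moreover have "l \<in> R"
    using kl(1) closed by (rule prod_of_mem)
  then obtain y' where "y' \<in> R" "y' \<notin> range (\<lambda>c. sc c l)"
    using not_line by blast
  then obtain k' x where x: "prod_of m R k' x" "x \<notin> range (\<lambda>c. sc c l)"
    and deeper': "\<And>j z. prod_of m R j z \<Longrightarrow> k' < j \<Longrightarrow> z \<in> range (\<lambda>c. sc c l)"
    using nilpotent_deepest_product[OF assms(2) closed, of y' "range (\<lambda>c. sc c l)"]
    by (metis rangeI scale_zero_left)
  have "prod_of m R (k' + 1) (m x x)"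
    using prod_of_shorter[OF prod_of.mult[OF x(1) x(1)] closed] prod_of_pos[OF x(1)] by simp
  then have "m x x \<in> range (\<lambda>c. sc c l)"
    using deeper' by simp
  ultimately show ?thesis
    using that prod_of_mem[OF x(1) closed] \<open>l \<in> R\<close> kl(2) x(2) by blast
qed

section \<open>Z-orders and copies of Z^2 in their unit loops\<close>

context
  fixes G assumes order: "Z_order sc m e G"
begin

lemma Z_order_unit: "e \<in> G"
  and Z_order_diff: "x \<in> G \<Longrightarrow> y \<in> G \<Longrightarrow> x - y \<in> G"
  and Z_order_mult: "x \<in> G \<Longrightarrow> y \<in> G \<Longrightarrow> m x y \<in> G"
  and Z_order_span: "span G = UNIV"
  using order unfolding Z_order_def by auto

lemma Z_order_zero: "0 \<in> G"
  using Z_order_diff[OF Z_order_unit Z_order_unit] by simp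

lemma Z_order_add: "x \<in> G \<Longrightarrow> y \<in> G \<Longrightarrow> x + y \<in> G"
  using Z_order_diff[of x "0 - y"] Z_order_diff[OF Z_order_zero, of y] by simp

lemma Z_order_int_scale:
  assumes "g \<in> G"
  shows "sc (of_int k) g \<in> G"
proof (induction k rule: int_induct[where k = 0])
  case base
  show ?case using Z_order_zero by simp
next
  case (step1 i)
  then show ?case
    using Z_order_add[OF _ assms] by (simp add: scale_left_distrib)
next
  case (step2 i)
  then show ?case
    using Z_order_diff[OF _ assms] by (simp add: scale_left_diff_distrib)
qed

lemma Z_order_nat_multiple:
  obtains N :: nat where "0 < N" and "sc (of_nat N) v \<in> G"
proof -
  have "v \<in> span G" using Z_order_span by simp
  then have "\<exists>N::nat. 0 < N \<and> sc (of_nat N) v \<in> G"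
  proof (induction rule: span_induct_alt)
    case base
    show ?case using Z_order_zero by (intro exI[of _ 1]) simp
  next
    case (step c x y)
    then obtain N :: nat where N: "0 < N" "sc (of_nat N) y \<in> G" by auto
    obtain p q where pq: "quotient_of c = (p, q)" by (cases "quotient_of c")
    have "0 < q" and c: "c = of_int p / of_int q"
      using quotient_of_denom_pos[OF pq] quotient_of_div[OF pq] .
    have "of_int q * of_nat N * c = of_int (p * int N)"
      using \<open>0 < q\<close> unfolding c by simp
    then have "sc (of_int q * of_nat N) (sc c x + y) =
        sc (of_int (p * int N)) x + sc (of_int q) (sc (of_nat N) y)"
      by (simp only: scale_right_distrib scale_scale)
    also have "\<dots> \<in> G"
      by (intro Z_order_add Z_order_int_scale step(1) N(2))
    moreover have "(of_int q * of_nat N :: rat) = of_nat (nat q * N)" and "0 < nat q * N"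
      using \<open>0 < q\<close> N(1) by simp_all
    ultimately show ?case
      by metis
  qed
  then show ?thesis using that by blast
qed

lemma contains_Z2_square_zero_extension:
  assumes "X \<in> G" and "Y \<in> G" and "Y \<noteq> 0" and "X \<notin> range (\<lambda>c. sc c Y)"
    and "m X Y = 0" and "m Y X = 0" and "m Y Y = 0" and XX: "m X X = sc (of_int (2 * t)) Y"
  shows "contains_Z2 m (unit_loop m e G)"
proof -
  \<comment> \<open>The quadratic correction compensates the cross term 2tac Y in (e + aX)(e + cX).\<close>
  define \<phi> where "\<phi> = (\<lambda>(a::int, b::int). e + sc (of_int a) X + sc (of_int (b + t * a\<^sup>2)) Y)"
  have in_G: "\<phi> (a, b) \<in> G" for a b
    unfolding \<phi>_def prod.case
    by (intro Z_order_add Z_order_unit Z_order_int_scale assms(1,2))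
  have hom: "\<phi> (a + c, b + d) = m (\<phi> (a, b)) (\<phi> (c, d))" for a b c d
  proof -
    have "m (\<phi> (a, b)) (\<phi> (c, d)) = e + (sc (of_int c) X + sc (of_int a) X)
        + (sc (of_int (d + t * c\<^sup>2)) Y + sc (of_int (b + t * a\<^sup>2)) Y
           + sc (of_int a * of_int c * of_int (2 * t)) Y)"
      unfolding \<phi>_def by (simp add: assms(5-7) XX algebra_simps)
    also have "\<dots> = e + sc (of_int c + of_int a) X + sc (of_int (d + t * c\<^sup>2)
        + of_int (b + t * a\<^sup>2) + of_int a * of_int c * of_int (2 * t)) Y"
      by (simp only: scale_left_distrib)
    also have "\<dots> = \<phi> (a + c, b + d)"
      unfolding \<phi>_def by (simp add: algebra_simps power2_eq_square)
    finally show ?thesis by simp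
  qed
  have "inj \<phi>"
  proof (rule injI)
    fix p q :: "int \<times> int"
    assume eq: "\<phi> p = \<phi> q"
    obtain a b c d where p: "p = (a, b)" and q: "q = (c, d)" by fastforce
    have diff: "sc (of_int a - of_int c) X = sc (of_int (d + t * c\<^sup>2) - of_int (b + t * a\<^sup>2)) Y"
      using eq unfolding p q \<phi>_def by (simp add: scale_left_diff_distrib algebra_simps)
    have "a = c"
    proof (rule ccontr)
      assume "a \<noteq> c"
      then have "X = sc (inverse (of_int a - of_int c)) (sc (of_int a - of_int c) X)" by simp
      also have "\<dots> = sc (inverse (of_int a - of_int c) *
          (of_int (d + t * c\<^sup>2) - of_int (b + t * a\<^sup>2))) Y"
        by (simp only: diff scale_scale)
      finally show False using assms(4) by blast
    qed
    with diff \<open>Y \<noteq> 0\<close> have "b = d" by simp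
    with \<open>a = c\<close> show "p = q" by (simp add: p q)
  qed
  moreover have "range \<phi> \<subseteq> unit_loop m e G"
  proof
    fix u assume "u \<in> range \<phi>"
    then obtain a b where u: "u = \<phi> (a, b)" by auto
    have "\<phi> (0, 0) = e" unfolding \<phi>_def by simp
    then have "m u (\<phi> (-a, -b)) = e" "m (\<phi> (-a, -b)) u = e"
      using hom[of a "-a" b "-b"] hom[of "-a" a "-b" b] u by simp_all
    then show "u \<in> unit_loop m e G"
      unfolding unit_loop_def using in_G u by blast
  qed
  ultimately show ?thesis
    unfolding contains_Z2_def using hom by blast
qed

lemma contains_Z2_of_square_in_line:
  assumes "l \<noteq> 0" and "m x l = 0" and "m l x = 0" and "m l l = 0"
    and x: "x \<notin> range (\<lambda>c. sc c l)" and xx: "m x x = sc s l"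
  shows "contains_Z2 m (unit_loop m e G)"
proof -
  obtain N :: nat where N: "0 < N" "sc (of_nat N) x \<in> G"
    using Z_order_nat_multiple by blast
  obtain M :: nat where M: "0 < M" "sc (of_nat M) l \<in> G"
    using Z_order_nat_multiple by blast
  have outside_line: "sc a x \<notin> range (\<lambda>c. sc c (sc q l))" if "a \<noteq> 0" for a q
  proof
    assume "sc a x \<in> range (\<lambda>c. sc c (sc q l))"
    then obtain c where "sc a x = sc (c * q) l" by auto
    then have "x = sc (inverse a * (c * q)) l"
      using \<open>a \<noteq> 0\<close> by (metis scale_scale scale_one left_inverse)
    with x show False by blast
  qed
  define X0 where "X0 = sc (of_nat N) x"
  have "X0 \<in> G" "m X0 l = 0" "m l X0 = 0"
    unfolding X0_def using N(2) assms(2,3) by simp_all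
  show ?thesis
  proof (cases "m X0 X0 = 0")
    case True
    show ?thesis
    proof (rule contains_Z2_square_zero_extension[of X0 "sc (of_nat M) l" 0])
      show "X0 \<notin> range (\<lambda>c. sc c (sc (of_nat M) l))"
        unfolding X0_def using N(1) by (intro outside_line) simp
    qed (use M True \<open>l \<noteq> 0\<close> \<open>m X0 l = 0\<close> \<open>m l X0 = 0\<close> \<open>X0 \<in> G\<close> assms(4) in simp_all)
  next
    case False
    have Y: "m X0 X0 = sc (of_nat N * of_nat N * s) l"
      by (simp add: X0_def xx)
    have X: "sc 2 X0 = sc (2 * of_nat N) x"
      by (simp add: X0_def)
    show ?thesis
    proof (rule contains_Z2_square_zero_extension[of "sc 2 X0" "m X0 X0" 2])
      show "sc 2 X0 \<in> G"
        using Z_order_int_scale[OF \<open>X0 \<in> G\<close>, of 2] by simp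
      show "m X0 X0 \<in> G"
        by (intro Z_order_mult \<open>X0 \<in> G\<close>)
      show "sc 2 X0 \<notin> range (\<lambda>c. sc c (m X0 X0))"
        unfolding X Y using N(1) by (intro outside_line) simp
    qed (use False \<open>m X0 l = 0\<close> \<open>m l X0 = 0\<close> assms(4) in \<open>simp_all add: Y\<close>)
  qed
qed

end

lemma hyperbolic_nilpotent_ideal_is_line:
  assumes "Z_order sc m e G" and "\<not> contains_Z2 m (unit_loop m e G)"
    and ideal: "is_ideal sc m R" and nil: "nilpotent_set m R"
  obtains j0 where "R = {sc c j0 | c. True}"
proof -
  have "\<exists>j0\<in>R. R \<subseteq> range (\<lambda>c. sc c j0)"
  proof (rule ccontr)
    assume "\<not> ?thesis"
    then obtain x l where "x \<in> R" "l \<in> R" "l \<noteq> 0"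
      and "\<And>z. z \<in> R \<Longrightarrow> m l z = 0" "\<And>z. z \<in> R \<Longrightarrow> m z l = 0"
      and "x \<notin> range (\<lambda>c. sc c l)" and "m x x \<in> range (\<lambda>c. sc c l)"
      using nilpotent_ideal_square_in_line[OF ideal nil] by blast
    then have "contains_Z2 m (unit_loop m e G)"
      by (auto intro: contains_Z2_of_square_in_line[OF assms(1)])
    with assms(2) show False ..
  qed
  then obtain j0 where "j0 \<in> R" and "R \<subseteq> range (\<lambda>c. sc c j0)"
    by blast
  then have "R = {sc c j0 | c. True}"
    using ideal subspace_scale unfolding is_ideal_def by blast
  then show ?thesis by (rule that)
qed

lemma nilpotent_line_square_eq_0:
  assumes "nilpotent_set m R" and R: "R = {sc c j | c. True}" and "m j j \<in> R"
  shows "m j j = 0"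
proof -
  obtain c where c: "m j j = sc c j"
    using assms(3) R by blast
  show ?thesis
  proof (cases "c = 0")
    case False
    have "sc (inverse c) j \<in> R" using R by blast
    then have "sc (inverse c) j = 0"
      by (rule nilpotent_idempotent_eq_0[OF assms(1)]) (simp add: c False)
    then show ?thesis using False by simp
  qed (simp add: c)
qed

end

lemma Q_algebra_if_fd_Q_algebra: "fd_Q_algebra sc m e \<Longrightarrow> Q_algebra sc m e"
  unfolding fd_Q_algebra_def Q_algebra_def Q_algebra_axioms_def by blast

theorem proposition2p2:
  fixes sc :: "rat \<Rightarrow> 'a::ab_group_add \<Rightarrow> 'a"
    and m :: "'a \<Rightarrow> 'a \<Rightarrow> 'a" and e :: 'a and R :: "'a set"
  assumes "fd_Q_algebra sc m e"
    and "alternative m"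
    and "is_radical sc m R"
    and "hyperbolic_algebra sc m e"
  shows "(\<forall>x\<in>R. \<forall>y\<in>R. m x y = 0) \<and>
         (\<exists>j0\<in>R. m j0 j0 = 0 \<and> R = {sc c j0 | c. True})"
proof -
  interpret Q_algebra sc m e
    using assms(1) by (rule Q_algebra_if_fd_Q_algebra)
  have ideal: "is_ideal sc m R" and nil: "nilpotent_set m R"
    using assms(3) unfolding is_radical_def by auto
  obtain G where "Z_order sc m e G" and "\<not> contains_Z2 m (unit_loop m e G)"
    using assms(4) unfolding hyperbolic_algebra_def hyperbolic_loop_def by blast
  then obtain j0 where R: "R = {sc c j0 | c. True}"
    using hyperbolic_nilpotent_ideal_is_line ideal nil by blast
  have "j0 \<in> R" using R by (auto intro: exI[of _ 1])
  then have "m j0 j0 = 0"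
    using nilpotent_line_square_eq_0[OF nil R] ideal unfolding is_ideal_def by blast
  then have "\<forall>x\<in>R. \<forall>y\<in>R. m x y = 0"
    using R by auto
  with \<open>j0 \<in> R\<close> \<open>m j0 j0 = 0\<close> R show ?thesis by blast
qed

end
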